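(* For $v\ge 0$, $\Lambda(v)=0$ if and only if $v=0$ and $G=\delta_0$.
   Context: Model: Let $G$ be a probability measure on $[0,\infty)$. In the nearest-neighbour lattice $\mathbb Z^2$, every vertical edge receives the deterministic weight $1$, and every horizontal edge (joining $(x,y)$ and $(x+1,y)$) receives a random weight, the horizontal weights being i.i.d. with law $G$. A path is a sequence of points of $\mathbb Z^2$ with consecutive points joined by an edge; its passage time $T(p)$ is the sum of the weights $\tau_e$ over edges $e=(z_k,z_{k+1})$ of $p$, and $T(u,w)=\inf_p T(p)$ over paths from $u$ to $w$. For $v\ge0$, $\Lambda(v)=\lim_{n\to\infty}\frac1nT((0,0),(n,\lceil vn\rceil))$, which exists almost surely and is deterministic. $\delta_0$ is the point mass at $0$. *)

theory Defs
  imports "HOL-Probability.Probability"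
begin

text \<open>First-passage percolation on the lattice Z^2: vertical edges have weight 1,
  the horizontal edge joining (x,y) and (x+1,y) has weight t (x,y).\<close>

type_synonym site = "int \<times> int"

definition lattice_adj :: "site \<Rightarrow> site \<Rightarrow> bool" where
  "lattice_adj u w \<longleftrightarrow> \<bar>fst u - fst w\<bar> + \<bar>snd u - snd w\<bar> = 1"

definition edge_weight :: "(site \<Rightarrow> real) \<Rightarrow> site \<Rightarrow> site \<Rightarrow> real" where
  "edge_weight t u w = (if snd u = snd w then t (min (fst u) (fst w), snd u) else 1)"

definition lattice_path :: "site \<Rightarrow> site \<Rightarrow> site list \<Rightarrow> bool" where
  "lattice_path u w p \<longleftrightarrow> p \<noteq> [] \<and> hd p = u \<and> last p = w \<and>
     (\<forall>i. Suc i < length p \<longrightarrow> lattice_adj (p ! i) (p ! Suc i))"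

definition path_time :: "(site \<Rightarrow> real) \<Rightarrow> site list \<Rightarrow> real" where
  "path_time t p = sum_list (map (\<lambda>(a, b). edge_weight t a b) (zip p (tl p)))"

definition passage_time :: "(site \<Rightarrow> real) \<Rightarrow> site \<Rightarrow> site \<Rightarrow> real" where
  "passage_time t u w = (INF p \<in> {p. lattice_path u w p}. path_time t p)"

end

theory Submission
  imports Defs "HOL-Real_Asymp.Real_Asymp"
begin

(* Vertical steps cost 1, so reaching height ceil (v n) costs at least v n and Lambda(v) >= v;
   if all weights vanish, the straight horizontal path costs nothing. The substance is that
   Lambda(0) > 0 unless G = delta_0. A path to (n, 0) of time below dl n crosses every column
   x -> x + 1 at some height y_x, pays the weights t (x, y_x), and travels vertically at least
   sum_x |y_(x+1) - y_x|, which is also below dl n. Summing exp (- lam * cost) over all such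
   crossing sequences gives a random variable of expectation at most (c(lam) * phi(lam))^n,
   where phi(lam) = E exp (- lam t) <= P(t < eps) + exp (- lam eps) and
   c(lam) = sum_(k in Z) exp (- lam |k|) tends to 1. If G charges [eps, oo), then P(t < eps) < 1,
   so for large lam the bound decays exponentially, and by Markov's inequality a passage time
   of order o(n) has probability zero. *)

section \<open>Lattice paths and passage times\<close>

lemma lattice_path_iff:
  "lattice_path u w p \<longleftrightarrow> (\<exists>q. p = u # q \<and> last (u # q) = w \<and> successively lattice_adj (u # q))"
  unfolding lattice_path_def successively_conv_nth by (cases p) auto

lemma lattice_adj_cases:
  assumes "lattice_adj u w"
  obtains (vertical) "fst w = fst u" "\<bar>snd w - snd u\<bar> = 1"
    | (right) "snd w = snd u" "fst w = fst u + 1"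
    | (left) "snd w = snd u" "fst w = fst u - 1"
  using assms unfolding lattice_adj_def by arith

lemma edge_weight_nonneg: "(\<And>e. 0 \<le> t e) \<Longrightarrow> 0 \<le> edge_weight t u w"
  by (simp add: edge_weight_def)

lemma path_time_singleton [simp]: "path_time t [u] = 0"
  by (simp add: path_time_def)

lemma path_time_Cons_Cons [simp]:
  "path_time t (u # u' # q) = edge_weight t u u' + path_time t (u' # q)"
  by (simp add: path_time_def)

lemma path_time_nonneg: "(\<And>e. 0 \<le> t e) \<Longrightarrow> 0 \<le> path_time t p"
  unfolding path_time_def by (rule sum_list_nonneg) (auto intro: edge_weight_nonneg)

lemma lattice_path_exists: "\<exists>p. lattice_path u w p"
proof -
  have "\<exists>q. last (u # q) = w \<and> successively lattice_adj (u # q)"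
    if "nat (\<bar>fst w - fst u\<bar> + \<bar>snd w - snd u\<bar>) = k" for k u
    using that
  proof (induction k arbitrary: u)
    case 0
    then show ?case by (intro exI[of _ "[]"]) (auto simp: prod_eq_iff)
  next
    case (Suc k)
    define u' where "u' = (if fst u \<noteq> fst w then (fst u + sgn (fst w - fst u), snd u)
                           else (fst u, snd u + sgn (snd w - snd u)))"
    have "lattice_adj u u'" "nat (\<bar>fst w - fst u'\<bar> + \<bar>snd w - snd u'\<bar>) = k"
      using Suc.prems by (auto simp: u'_def lattice_adj_def sgn_if)
    with Suc.IH obtain q where "last (u' # q) = w" "successively lattice_adj (u' # q)"
      by blast
    with \<open>lattice_adj u u'\<close> show ?case by (intro exI[of _ "u' # q"]) auto
  qed
  then show ?thesis by (auto simp: lattice_path_iff)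
qed

lemma path_time_ge_height_diff:
  assumes "\<And>e. 0 \<le> t e" "successively lattice_adj (u # q)"
  shows "real_of_int \<bar>snd (last (u # q)) - snd u\<bar> \<le> path_time t (u # q)"
  using assms(2)
proof (induction q arbitrary: u)
  case (Cons u' q)
  then have IH: "real_of_int \<bar>snd (last (u' # q)) - snd u'\<bar> \<le> path_time t (u' # q)" by simp
  have last: "last (u # u' # q) = last (u' # q)" by simp
  from \<open>successively lattice_adj (u # u' # q)\<close> have "lattice_adj u u'" by simp
  then show ?case
  proof (cases rule: lattice_adj_cases)
    case vertical
    then have "edge_weight t u u' = 1" by (simp add: edge_weight_def)
    with vertical IH show ?thesis unfolding last path_time_Cons_Cons by linarith
  qed (use IH edge_weight_nonneg[of t u u', OF assms(1)] in simp_all)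
qed simp

lemma passage_time_le_path_time:
  assumes "\<And>e. 0 \<le> t e" "lattice_path u w p"
  shows "passage_time t u w \<le> path_time t p"
  unfolding passage_time_def
  by (rule cINF_lower) (use assms path_time_nonneg in \<open>auto intro!: bdd_belowI\<close>)

lemma passage_time_lessE:
  assumes "passage_time t u w < a"
  obtains p where "lattice_path u w p" "path_time t p < a"
  using cInf_lessD[of "path_time t ` {p. lattice_path u w p}" a] assms lattice_path_exists
  unfolding passage_time_def by auto

lemma passage_time_ge_height_diff:
  assumes "\<And>e. 0 \<le> t e"
  shows "real_of_int \<bar>snd w - snd u\<bar> \<le> passage_time t u w"
  unfolding passage_time_def
proof (rule cINF_greatest)
  fix p assume "p \<in> {p. lattice_path u w p}"
  then obtain q where "p = u # q" "last (u # q) = w" "successively lattice_adj (u # q)"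
    by (auto simp: lattice_path_iff)
  with path_time_ge_height_diff[of t u q] assms
  show "real_of_int \<bar>snd w - snd u\<bar> \<le> path_time t p" by simp
qed (use lattice_path_exists in auto)

lemma passage_time_zero_weights: "passage_time (\<lambda>_. 0) (x, y) (x + int n, y) = 0"
proof -
  let ?p = "\<lambda>x n. map (\<lambda>i. (x + int i, y)) [0..<Suc n]"
  have "lattice_path (x, y) (x + int n, y) (?p x n) \<and> path_time (\<lambda>_. 0) (?p x n) = 0" for x
  proof (induction n arbitrary: x)
    case 0
    then show ?case by (simp add: lattice_path_def)
  next
    case (Suc n)
    have p: "?p x (Suc n) = (x, y) # ?p (x + 1) n"
      by (subst map_upt_Suc) (simp add: algebra_simps)
    from Suc.IH[of "x + 1"] show ?case
      unfolding p
      by (auto simp: lattice_path_iff lattice_adj_def edge_weight_def algebra_simps map_upt_Suc)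
  qed
  then have "passage_time (\<lambda>_. 0) (x, y) (x + int n, y) \<le> 0"
    by (metis order.refl passage_time_le_path_time)
  moreover have "0 \<le> passage_time (\<lambda>_. 0) (x, y) (x + int n, y)"
    using passage_time_ge_height_diff[of "\<lambda>_. 0" "(x + int n, y)" "(x, y)"] by simp
  ultimately show ?thesis by simp
qed

section \<open>Crossing sequences\<close>

fun height_variation :: "int \<Rightarrow> int list \<Rightarrow> real" where
  "height_variation b [] = 0"
| "height_variation b (y # ys) = real_of_int \<bar>y - b\<bar> + height_variation y ys"

fun crossing_time :: "(site \<Rightarrow> real) \<Rightarrow> int \<Rightarrow> int list \<Rightarrow> real" where
  "crossing_time t x [] = 0"
| "crossing_time t x (y # ys) = t (x, y) + crossing_time t (x + 1) ys"

lemma height_variation_nonneg: "0 \<le> height_variation b ys"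
  by (induction ys arbitrary: b) auto

lemma height_variation_change_start:
  "height_variation b ys \<le> real_of_int \<bar>b - b'\<bar> + height_variation b' ys"
  by (cases ys) auto

lemma abs_nth_le_height_variation:
  "i < length ys \<Longrightarrow> real_of_int \<bar>ys ! i - b\<bar> \<le> height_variation b ys"
proof (induction ys arbitrary: b i)
  case (Cons y ys)
  show ?case
  proof (cases i)
    case 0
    then show ?thesis using height_variation_nonneg[of y ys] by simp
  next
    case (Suc j)
    with Cons have "real_of_int \<bar>ys ! j - y\<bar> \<le> height_variation y ys" by simp
    with Suc show ?thesis by simp
  qed
qed simp

lemma crossing_time_nonneg: "(\<And>e. 0 \<le> t e) \<Longrightarrow> 0 \<le> crossing_time t x ys"
  by (induction ys arbitrary: x) (auto intro: add_nonneg_nonneg)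

lemma crossing_time_eq_sum: "crossing_time t x ys = (\<Sum>i<length ys. t (x + int i, ys ! i))"
  by (induction ys arbitrary: x)
    (simp_all del: sum.lessThan_Suc add: sum.lessThan_Suc_shift algebra_simps)

text \<open>A path starting at u that reaches column fst u + m crosses, for each i < m, the edge from
  column fst u + i to fst u + i + 1 at some height ys ! i; moving between these heights costs
  at least their height variation in vertical steps.\<close>

lemma path_time_ge_crossing_cost:
  assumes nonneg: "\<And>e. 0 \<le> t e"
    and "successively lattice_adj (u # q)" "fst u + int m \<le> fst (last (u # q))"
  shows "\<exists>ys. length ys = m \<and>
           height_variation (snd u) ys + crossing_time t (fst u) ys \<le> path_time t (u # q)"
  using assms(2,3)
proof (induction q arbitrary: u m)
  case Nil
  then show ?case by (intro exI[of _ "[]"]) auto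
next
  case (Cons u' q)
  have adj: "lattice_adj u u'" and path: "successively lattice_adj (u' # q)"
    using Cons.prems(1) by auto
  have time: "path_time t (u # u' # q) = edge_weight t u u' + path_time t (u' # q)" by simp
  show ?case
  proof (cases "m = 0")
    case True
    then show ?thesis using path_time_nonneg[of t "u # u' # q"] nonneg
      by (intro exI[of _ "[]"]) auto
  next
    case False
    from adj show ?thesis
    proof (cases rule: lattice_adj_cases)
      case vertical
      with Cons.IH[OF path, of m] Cons.prems(2) obtain ys where
        ys: "length ys = m"
          "height_variation (snd u') ys + crossing_time t (fst u') ys \<le> path_time t (u' # q)"
        by auto
      have "height_variation (snd u) ys \<le> 1 + height_variation (snd u') ys"
        using height_variation_change_start[of "snd u" ys "snd u'"] vertical
        by (simp add: abs_minus_commute)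
      with ys vertical time show ?thesis by (intro exI[of _ ys]) (auto simp: edge_weight_def)
    next
      case right
      obtain m' where m': "m = Suc m'" using \<open>m \<noteq> 0\<close> not0_implies_Suc by blast
      with Cons.IH[OF path, of m'] Cons.prems(2) right obtain ys where
        ys: "length ys = m'"
          "height_variation (snd u') ys + crossing_time t (fst u') ys \<le> path_time t (u' # q)"
        by auto
      with right time m' show ?thesis
        by (intro exI[of _ "snd u # ys"]) (auto simp: edge_weight_def)
    next
      case left
      with Cons.IH[OF path, of "Suc m"] Cons.prems(2) obtain y ys where
        ys: "length ys = m"
          "height_variation (snd u') (y # ys) + crossing_time t (fst u') (y # ys)
             \<le> path_time t (u' # q)"
        by (auto simp: length_Suc_conv)
      have "height_variation (snd u) ys \<le> real_of_int \<bar>snd u - y\<bar> + height_variation y ys"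
        by (rule height_variation_change_start)
      moreover have "0 \<le> t (fst u - 1, y)" "0 \<le> edge_weight t u u'"
        using nonneg by (auto intro: edge_weight_nonneg)
      ultimately show ?thesis using ys left time
        by (intro exI[of _ ys]) (auto simp: abs_minus_commute)
    qed
  qed
qed

section \<open>Exponential sums over crossing sequences\<close>

lemma sum_power_le_geometric:
  fixes r :: real
  assumes "finite K" "0 \<le> r" "r < 1"
  shows "(\<Sum>k\<in>K. r ^ k) \<le> 1 / (1 - r)"
proof -
  have "(\<Sum>k\<in>K. r ^ k) \<le> (\<Sum>k. r ^ k)"
    using assms by (intro sum_le_suminf summable_geometric) auto
  also have "\<dots> = 1 / (1 - r)" using assms by (intro suminf_geometric) auto
  finally show ?thesis .
qed

text \<open>With r = exp (- lam), (1 + r) / (1 - r) is the sum of r ^ \<bar>k\<bar> over all integers k.\<close>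

definition two_sided_geometric_sum :: "real \<Rightarrow> real" where
  "two_sided_geometric_sum lam = (1 + exp (- lam)) / (1 - exp (- lam))"

lemma two_sided_geometric_sum_pos: "0 < lam \<Longrightarrow> 0 < two_sided_geometric_sum lam"
  unfolding two_sided_geometric_sum_def by (simp add: add_pos_nonneg)

lemma sum_exp_abs_diff_le:
  fixes A :: "int set" and lam :: real
  assumes "finite A" "0 < lam"
  shows "(\<Sum>y\<in>A. exp (- lam * real_of_int \<bar>y - b\<bar>)) \<le> two_sided_geometric_sum lam"
proof -
  define r where "r = exp (- lam)"
  have r: "0 \<le> r" "r < 1" using assms unfolding r_def by auto
  have exp_eq: "exp (- lam * real_of_int \<bar>y - b\<bar>) = r ^ nat \<bar>y - b\<bar>" for y
    unfolding r_def by (simp flip: exp_of_nat_mult)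
  define A1 where "A1 = {y\<in>A. b \<le> y}"
  define A2 where "A2 = {y\<in>A. y < b}"
  have fin: "finite A1" "finite A2" using assms unfolding A1_def A2_def by auto
  have "(\<Sum>y\<in>A1. r ^ nat \<bar>y - b\<bar>) = (\<Sum>k\<in>(\<lambda>y. nat (y - b)) ` A1. r ^ k)"
    by (subst sum.reindex) (auto simp: A1_def inj_on_def intro!: sum.cong)
  also have "\<dots> \<le> 1 / (1 - r)" using fin r by (intro sum_power_le_geometric) auto
  finally have A1_le: "(\<Sum>y\<in>A1. r ^ nat \<bar>y - b\<bar>) \<le> 1 / (1 - r)" .
  have "(\<Sum>y\<in>A2. r ^ nat \<bar>y - b\<bar>) = r * (\<Sum>k\<in>(\<lambda>y. nat (b - y - 1)) ` A2. r ^ k)"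
  proof -
    have "nat \<bar>y - b\<bar> = Suc (nat (b - y - 1))" if "y \<in> A2" for y
      using that unfolding A2_def by auto
    then show ?thesis
      by (subst sum.reindex) (auto simp: A2_def inj_on_def sum_distrib_left intro!: sum.cong)
  qed
  also have "\<dots> \<le> r * (1 / (1 - r))"
    using fin r by (intro mult_left_mono sum_power_le_geometric) auto
  finally have A2_le: "(\<Sum>y\<in>A2. r ^ nat \<bar>y - b\<bar>) \<le> r / (1 - r)" by simp
  have "(\<Sum>y\<in>A. exp (- lam * real_of_int \<bar>y - b\<bar>))
      = (\<Sum>y\<in>A1. r ^ nat \<bar>y - b\<bar>) + (\<Sum>y\<in>A2. r ^ nat \<bar>y - b\<bar>)"
    unfolding exp_eq using fin
    by (subst sum.union_disjoint[symmetric]) (auto simp: A1_def A2_def intro!: sum.cong)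
  also have "\<dots> \<le> (1 + r) / (1 - r)" using A1_le A2_le by (simp add: add_divide_distrib)
  finally show ?thesis unfolding r_def two_sided_geometric_sum_def .
qed

lemma sum_lists_exp_height_variation_le:
  fixes A :: "int set" and lam c :: real
  assumes "finite A" and bound: "\<And>b. (\<Sum>y\<in>A. exp (- lam * real_of_int \<bar>y - b\<bar>)) \<le> c"
  shows "(\<Sum>ys\<in>{ys. set ys \<subseteq> A \<and> length ys = n}. exp (- lam * height_variation b ys)) \<le> c ^ n"
proof (induction n arbitrary: b)
  case 0
  have "{ys. set ys \<subseteq> A \<and> length ys = 0} = {[]}" by auto
  then show ?case by simp
next
  case (Suc n)
  let ?L = "{ys. set ys \<subseteq> A \<and> length ys = n}"
  have "0 \<le> c" using bound[of 0] sum_nonneg[of A "\<lambda>y. exp (- lam * real_of_int \<bar>y - 0\<bar>)"] by auto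
  have "(\<Sum>ys\<in>{ys. set ys \<subseteq> A \<and> length ys = Suc n}. exp (- lam * height_variation b ys))
      = (\<Sum>(ys, y)\<in>?L \<times> A. exp (- lam * height_variation b (y # ys)))"
    unfolding lists_length_Suc_eq by (subst sum.reindex) (auto simp: inj_on_def case_prod_beta)
  also have "\<dots> = (\<Sum>ys\<in>?L. \<Sum>y\<in>A.
                      exp (- lam * real_of_int \<bar>y - b\<bar>) * exp (- lam * height_variation y ys))"
    by (simp only: height_variation.simps distrib_left exp_add sum.cartesian_product)
  also have "\<dots> = (\<Sum>y\<in>A. exp (- lam * real_of_int \<bar>y - b\<bar>)
                      * (\<Sum>ys\<in>?L. exp (- lam * height_variation y ys)))"
    by (subst sum.swap) (simp add: sum_distrib_left)
  also have "\<dots> \<le> (\<Sum>y\<in>A. exp (- lam * real_of_int \<bar>y - b\<bar>)) * c ^ n"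
    unfolding sum_distrib_right by (intro sum_mono mult_left_mono Suc.IH) auto
  also have "\<dots> \<le> c * c ^ n" using bound[of b] \<open>0 \<le> c\<close> by (intro mult_right_mono) auto
  finally show ?case by simp
qed

definition height_seqs :: "nat \<Rightarrow> int list set" where
  "height_seqs n = {ys. set ys \<subseteq> {- int n..int n} \<and> length ys = n}"

lemma finite_height_seqs: "finite (height_seqs n)"
  unfolding height_seqs_def by (rule finite_lists_length_eq) simp

definition crossing_sum :: "real \<Rightarrow> nat \<Rightarrow> (site \<Rightarrow> real) \<Rightarrow> real" where
  "crossing_sum lam n t =
     (\<Sum>ys\<in>height_seqs n. exp (- lam * (height_variation 0 ys + crossing_time t 0 ys)))"

lemma exp_le_crossing_sum:
  assumes nonneg: "\<And>e. 0 \<le> t e" and "0 < lam" "dl \<le> 1"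
    and fast: "passage_time t (0, 0) (int n, 0) < dl * n"
  shows "exp (- lam * (dl * n)) \<le> crossing_sum lam n t"
proof -
  obtain p where p: "lattice_path (0, 0) (int n, 0) p" "path_time t p < dl * n"
    using fast by (rule passage_time_lessE)
  then obtain q where "p = (0, 0) # q" "successively lattice_adj p" "last p = (int n, 0)"
    unfolding lattice_path_iff by auto
  with path_time_ge_crossing_cost[of t "(0, 0)" q n] nonneg obtain ys where ys: "length ys = n"
    "height_variation 0 ys + crossing_time t 0 ys \<le> path_time t p"
    by auto
  have cost_lt: "height_variation 0 ys + crossing_time t 0 ys < n"
    using ys(2) p(2) mult_right_mono[OF \<open>dl \<le> 1\<close>, of n] by simp
  have "ys \<in> height_seqs n"
    unfolding height_seqs_def
  proof safe
    fix y assume "y \<in> set ys"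
    then obtain i where "i < length ys" "y = ys ! i" by (auto simp: in_set_conv_nth)
    with abs_nth_le_height_variation[of i ys 0] crossing_time_nonneg[of t 0 ys] nonneg cost_lt
    have "real_of_int \<bar>y\<bar> < n" by simp
    then show "y \<in> {- int n..int n}" by auto
  qed (use ys in simp)
  moreover have
    "exp (- lam * (dl * n)) \<le> exp (- lam * (height_variation 0 ys + crossing_time t 0 ys))"
    using ys(2) p(2) \<open>0 < lam\<close> by simp
  ultimately show ?thesis
    unfolding crossing_sum_def by (auto intro: order_trans[OF _ member_le_sum] finite_height_seqs)
qed

lemma (in prob_space) indep_vars_measurable:
  "indep_vars M' X I \<Longrightarrow> i \<in> I \<Longrightarrow> X i \<in> measurable M (M' i)"
  unfolding indep_vars_def by blast

lemma (in prob_space) nn_integral_exp_neg_le: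
  fixes Y :: "'a \<Rightarrow> real"
  assumes meas: "Y \<in> borel_measurable M" and nonneg: "AE \<omega> in M. 0 \<le> Y \<omega>" and "0 < lam"
  shows "(\<integral>\<^sup>+\<omega>. exp (- lam * Y \<omega>) \<partial>M) \<le> ennreal (prob {\<omega>\<in>space M. Y \<omega> < eps} + exp (- lam * eps))"
proof -
  let ?B = "{\<omega>\<in>space M. Y \<omega> < eps}"
  have B: "?B \<in> events" using meas by measurable
  have "(\<integral>\<^sup>+\<omega>. exp (- lam * Y \<omega>) \<partial>M) \<le> (\<integral>\<^sup>+\<omega>. indicator ?B \<omega> + ennreal (exp (- lam * eps)) \<partial>M)"
  proof (rule nn_integral_mono_AE)
    show "AE \<omega> in M. ennreal (exp (- lam * Y \<omega>)) \<le> indicator ?B \<omega> + ennreal (exp (- lam * eps))"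
      using nonneg AE_space
    proof eventually_elim
      case (elim \<omega>)
      have "exp (- lam * Y \<omega>) \<le> indicator ?B \<omega> + exp (- lam * eps)"
      proof (cases "Y \<omega> < eps")
        case True
        then show ?thesis using elim \<open>0 < lam\<close> by (simp add: add_increasing2)
      next
        case False
        then show ?thesis using \<open>0 < lam\<close> by (simp add: add_increasing)
      qed
      then have "ennreal (exp (- lam * Y \<omega>)) \<le> ennreal (indicator ?B \<omega> + exp (- lam * eps))"
        by (rule ennreal_leI)
      then show ?case by (simp add: ennreal_indicator)
    qed
  qed
  also have "\<dots> = ennreal (prob ?B + exp (- lam * eps))"
    using B by (simp add: nn_integral_add emeasure_eq_measure prob_space)
  finally show ?thesis .
qed

lemma measurable_crossing_time [measurable]:
  assumes "\<And>e. X e \<in> borel_measurable M"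
  shows "(\<lambda>\<omega>. crossing_time (\<lambda>e. X e \<omega>) x ys) \<in> borel_measurable M"
  by (induction ys arbitrary: x) (use assms in auto)

lemma measurable_crossing_sum [measurable]:
  assumes "\<And>e. X e \<in> borel_measurable M"
  shows "(\<lambda>\<omega>. crossing_sum lam n (\<lambda>e. X e \<omega>)) \<in> borel_measurable M"
  unfolding crossing_sum_def using assms by measurable

lemma (in prob_space) nn_integral_exp_crossing_cost_le:
  fixes X :: "site \<Rightarrow> 'a \<Rightarrow> real"
  assumes indep: "indep_vars (\<lambda>_. borel) X UNIV" and "0 \<le> ph"
    and moment: "\<And>e. (\<integral>\<^sup>+\<omega>. exp (- lam * X e \<omega>) \<partial>M) \<le> ennreal ph"
  shows "(\<integral>\<^sup>+\<omega>. exp (- lam * (height_variation b ys + crossing_time (\<lambda>e. X e \<omega>) x ys)) \<partial>M)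
           \<le> ennreal (exp (- lam * height_variation b ys) * ph ^ length ys)"
proof -
  have meas: "X e \<in> borel_measurable M" for e
    using indep_vars_measurable[OF indep] by simp
  define I where "I = (\<lambda>i. (x + int i, ys ! i)) ` {..<length ys}"
  have "finite I" and card_I: "card I = length ys"
    by (simp_all add: I_def card_image inj_on_def)
  have split: "ennreal (exp (- lam * (height_variation b ys + crossing_time (\<lambda>e. X e \<omega>) x ys)))
      = ennreal (exp (- lam * height_variation b ys)) * (\<Prod>e\<in>I. ennreal (exp (- lam * X e \<omega>)))" for \<omega>
  proof -
    have "exp (- lam * (height_variation b ys + crossing_time (\<lambda>e. X e \<omega>) x ys))
        = exp (- lam * height_variation b ys) * exp (- lam * crossing_time (\<lambda>e. X e \<omega>) x ys)"
      by (simp only: distrib_left exp_add)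
    also have "exp (- lam * crossing_time (\<lambda>e. X e \<omega>) x ys)
        = (\<Prod>i<length ys. exp (- lam * X (x + int i, ys ! i) \<omega>))"
      by (simp add: crossing_time_eq_sum sum_distrib_left exp_sum)
    also have "\<dots> = (\<Prod>e\<in>I. exp (- lam * X e \<omega>))"
      by (simp add: I_def prod.reindex inj_on_def)
    finally show ?thesis by (simp add: ennreal_mult prod_ennreal prod_nonneg)
  qed
  have indep_I: "indep_vars (\<lambda>_. borel) (\<lambda>e \<omega>. ennreal (exp (- lam * X e \<omega>))) I"
    by (rule indep_vars_compose2[OF indep_vars_subset[OF indep subset_UNIV]]) simp
  have "(\<integral>\<^sup>+\<omega>. (\<Prod>e\<in>I. ennreal (exp (- lam * X e \<omega>))) \<partial>M)
      = (\<Prod>e\<in>I. \<integral>\<^sup>+\<omega>. exp (- lam * X e \<omega>) \<partial>M)"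
    by (rule indep_vars_nn_integral[OF \<open>finite I\<close> indep_I]) simp
  also have "\<dots> \<le> ennreal ph ^ card I"
    using prod_mono_ennreal[of I "\<lambda>e. \<integral>\<^sup>+\<omega>. exp (- lam * X e \<omega>) \<partial>M" "\<lambda>_. ennreal ph"] moment
    by simp
  finally have prod_le: "(\<integral>\<^sup>+\<omega>. (\<Prod>e\<in>I. ennreal (exp (- lam * X e \<omega>))) \<partial>M) \<le> ennreal ph ^ card I" .
  have "(\<integral>\<^sup>+\<omega>. exp (- lam * (height_variation b ys + crossing_time (\<lambda>e. X e \<omega>) x ys)) \<partial>M)
      = ennreal (exp (- lam * height_variation b ys))
          * (\<integral>\<^sup>+\<omega>. (\<Prod>e\<in>I. ennreal (exp (- lam * X e \<omega>))) \<partial>M)"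
    unfolding split by (rule nn_integral_cmult) (use meas in measurable)
  also have "\<dots> \<le> ennreal (exp (- lam * height_variation b ys)) * ennreal ph ^ card I"
    using prod_le by (rule mult_left_mono) simp
  finally show ?thesis
    using \<open>0 \<le> ph\<close> by (simp add: card_I ennreal_mult ennreal_power)
qed

lemma (in prob_space) nn_integral_crossing_sum_le:
  fixes X :: "site \<Rightarrow> 'a \<Rightarrow> real"
  assumes indep: "indep_vars (\<lambda>_. borel) X UNIV" and "0 < lam" "0 \<le> ph"
    and moment: "\<And>e. (\<integral>\<^sup>+\<omega>. exp (- lam * X e \<omega>) \<partial>M) \<le> ennreal ph"
  shows "(\<integral>\<^sup>+\<omega>. crossing_sum lam n (\<lambda>e. X e \<omega>) \<partial>M)
           \<le> ennreal ((two_sided_geometric_sum lam * ph) ^ n)"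
proof -
  have meas: "X e \<in> borel_measurable M" for e
    using indep_vars_measurable[OF indep] by simp
  have "(\<integral>\<^sup>+\<omega>. crossing_sum lam n (\<lambda>e. X e \<omega>) \<partial>M)
      = (\<Sum>ys\<in>height_seqs n.
           \<integral>\<^sup>+\<omega>. exp (- lam * (height_variation 0 ys + crossing_time (\<lambda>e. X e \<omega>) 0 ys)) \<partial>M)"
    unfolding crossing_sum_def
    by (simp only: sum_ennreal[symmetric] exp_ge_zero)
      (rule nn_integral_sum, use meas in measurable)
  also have "\<dots> \<le> (\<Sum>ys\<in>height_seqs n. ennreal (exp (- lam * height_variation 0 ys) * ph ^ n))"
    using nn_integral_exp_crossing_cost_le[OF indep \<open>0 \<le> ph\<close> moment]
    by (intro sum_mono) (auto simp: height_seqs_def)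
  also have "\<dots> = ennreal ((\<Sum>ys\<in>height_seqs n. exp (- lam * height_variation 0 ys)) * ph ^ n)"
    using \<open>0 \<le> ph\<close> by (simp add: sum_distrib_right)
  also have "\<dots> \<le> ennreal (two_sided_geometric_sum lam ^ n * ph ^ n)"
    using sum_lists_exp_height_variation_le[OF _ sum_exp_abs_diff_le[OF _ \<open>0 < lam\<close>]] \<open>0 \<le> ph\<close>
    by (auto simp: height_seqs_def intro!: ennreal_leI mult_right_mono)
  finally show ?thesis by (simp add: power_mult_distrib)
qed

section \<open>Large deviations of the passage time\<close>

lemma (in prob_space) AE_not_eventually_in:
  assumes events: "\<And>n. B n \<in> events" and lim: "(\<lambda>n. prob (B n)) \<longlonglongrightarrow> 0"
  shows "AE \<omega> in M. \<not> (\<forall>\<^sub>F n in sequentially. \<omega> \<in> B n)"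
proof -
  have "(\<Inter>n\<in>{N..}. B n) \<in> null_sets M" for N
  proof -
    have "prob (\<Inter>n\<in>{N..}. B n) \<le> prob (B n)" if "N \<le> n" for n
      using that events by (intro finite_measure_mono) auto
    then have "prob (\<Inter>n\<in>{N..}. B n) \<le> 0"
      by (intro LIMSEQ_le_const[OF lim]) auto
    then show ?thesis using events by (auto simp: null_sets_def emeasure_eq_measure antisym)
  qed
  then have "AE \<omega> in M. \<forall>N. \<omega> \<notin> (\<Inter>n\<in>{N..}. B n)"
    unfolding AE_all_countable by (blast intro: AE_not_in)
  then show ?thesis by (auto simp: eventually_sequentially)
qed

text \<open>The rates come from letting lam tend to infinity with dl = 1 / lam^2, which drives
  the left-hand side below to q.\<close>

lemma exists_rates:
  fixes q eps :: real
  assumes "q < 1" "0 < eps"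
  obtains lam dl where "0 < lam" "0 < dl" "dl \<le> 1"
    "exp (lam * dl) * (two_sided_geometric_sum lam * (q + exp (- lam * eps))) < 1"
proof -
  let ?f = "\<lambda>lam. exp (lam * (1 / lam\<^sup>2)) * (two_sided_geometric_sum lam * (q + exp (- lam * eps)))"
  have "(?f \<longlongrightarrow> q) at_top"
    using \<open>0 < eps\<close> unfolding two_sided_geometric_sum_def by real_asymp
  then have "\<forall>\<^sub>F lam in at_top. ?f lam < 1"
    using \<open>q < 1\<close> by (rule order_tendstoD)
  moreover have "\<forall>\<^sub>F lam in at_top. (1::real) \<le> lam" by (rule eventually_ge_at_top)
  ultimately have "\<forall>\<^sub>F lam in at_top. ?f lam < 1 \<and> 1 \<le> lam" by (rule eventually_conj)
  then obtain lam where "?f lam < 1" "1 \<le> lam"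
    unfolding eventually_at_top_linorder by (metis order.refl)
  then show thesis
    by (intro that[of lam "1 / lam\<^sup>2"]) (auto simp: power_one_over divide_le_eq_1 less_le_trans)
qed

lemma (in prob_space) prob_crossing_sum_ge_le:
  fixes X :: "site \<Rightarrow> 'a \<Rightarrow> real"
  assumes indep: "indep_vars (\<lambda>_. borel) X UNIV" and "0 < lam" "0 \<le> ph"
    and moment: "\<And>e. (\<integral>\<^sup>+\<omega>. exp (- lam * X e \<omega>) \<partial>M) \<le> ennreal ph"
  shows "prob {\<omega>\<in>space M. exp (- lam * (dl * n)) \<le> crossing_sum lam n (\<lambda>e. X e \<omega>)}
           \<le> (exp (lam * dl) * (two_sided_geometric_sum lam * ph)) ^ n"
proof -
  have meas: "X e \<in> borel_measurable M" for e
    using indep_vars_measurable[OF indep] by simp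
  let ?a = "exp (- lam * (dl * n))"
  define B where "B = {\<omega>\<in>space M. ?a \<le> crossing_sum lam n (\<lambda>e. X e \<omega>)}"
  have "B \<in> events" unfolding B_def using meas by measurable
  then have "ennreal (?a * prob B) = (\<integral>\<^sup>+\<omega>. ennreal ?a * indicator B \<omega> \<partial>M)"
    by (simp add: nn_integral_cmult_indicator emeasure_eq_measure ennreal_mult)
  also have "\<dots> \<le> (\<integral>\<^sup>+\<omega>. crossing_sum lam n (\<lambda>e. X e \<omega>) \<partial>M)"
    by (rule nn_integral_mono) (auto simp: B_def indicator_def intro: ennreal_leI)
  also have "\<dots> \<le> ennreal ((two_sided_geometric_sum lam * ph) ^ n)"
    using nn_integral_crossing_sum_le[OF indep \<open>0 < lam\<close> \<open>0 \<le> ph\<close> moment] .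
  finally have Markov: "?a * prob B \<le> (two_sided_geometric_sum lam * ph) ^ n"
    using \<open>0 \<le> ph\<close> two_sided_geometric_sum_pos[OF \<open>0 < lam\<close>] by simp
  have "prob B = exp (lam * dl) ^ n * (?a * prob B)"
    by (simp add: algebra_simps flip: exp_of_nat_mult exp_add)
  also have "\<dots> \<le> exp (lam * dl) ^ n * (two_sided_geometric_sum lam * ph) ^ n"
    using Markov by (rule mult_left_mono) simp
  finally show ?thesis unfolding B_def by (simp add: power_mult_distrib)
qed

lemma eventually_exp_le_crossing_sum:
  fixes lam dl :: real
  assumes "\<And>e. 0 \<le> t e" "0 < lam" "0 < dl" "dl \<le> 1"
    and "(\<lambda>n. passage_time t (0, 0) (int n, 0) / n) \<longlonglongrightarrow> 0"
  shows "\<forall>\<^sub>F n in sequentially. exp (- lam * (dl * n)) \<le> crossing_sum lam n t"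
proof -
  have "\<forall>\<^sub>F n in sequentially. passage_time t (0, 0) (int n, 0) / n < dl"
    using assms(5) \<open>0 < dl\<close> by (rule order_tendstoD)
  with eventually_gt_at_top[of 0] show ?thesis
  proof eventually_elim
    case (elim n)
    then have "passage_time t (0, 0) (int n, 0) < dl * n" by (simp add: divide_less_eq)
    then show ?case by (rule exp_le_crossing_sum[OF assms(1,2,4)])
  qed
qed

lemma (in prob_space) AE_passage_time_not_sublinear:
  fixes X :: "site \<Rightarrow> 'a \<Rightarrow> real"
  assumes indep: "indep_vars (\<lambda>_. borel) X UNIV"
    and nonneg: "AE \<omega> in M. \<forall>e. 0 \<le> X e \<omega>"
    and "0 < eps" and small: "\<And>e. prob {\<omega>\<in>space M. X e \<omega> < eps} \<le> q" and "q < 1"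
  shows "AE \<omega> in M. \<not> (\<lambda>n. passage_time (\<lambda>e. X e \<omega>) (0, 0) (int n, 0) / n) \<longlonglongrightarrow> 0"
proof -
  have meas: "X e \<in> borel_measurable M" for e
    using indep_vars_measurable[OF indep] by simp
  have "0 \<le> q" using small[of "(0, 0)"] measure_nonneg[of M] by (meson order.trans)
  obtain lam dl where "0 < lam" "0 < dl" "dl \<le> 1"
    and rates: "exp (lam * dl) * (two_sided_geometric_sum lam * (q + exp (- lam * eps))) < 1"
    using exists_rates[OF \<open>q < 1\<close> \<open>0 < eps\<close>] .
  define ph where "ph = q + exp (- lam * eps)"
  define th where "th = exp (lam * dl) * (two_sided_geometric_sum lam * ph)"
  have "0 \<le> ph" "0 \<le> th" "th < 1"
    using \<open>0 \<le> q\<close> two_sided_geometric_sum_pos[OF \<open>0 < lam\<close>] rates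
    by (simp_all add: ph_def th_def)
  have moment: "(\<integral>\<^sup>+\<omega>. exp (- lam * X e \<omega>) \<partial>M) \<le> ennreal ph" for e
  proof -
    have "AE \<omega> in M. 0 \<le> X e \<omega>" using nonneg by eventually_elim blast
    moreover have "ennreal (prob {\<omega>\<in>space M. X e \<omega> < eps} + exp (- lam * eps)) \<le> ennreal ph"
      using small[of e] unfolding ph_def by (intro ennreal_leI) simp
    ultimately show ?thesis by (intro order_trans[OF nn_integral_exp_neg_le[OF meas _ \<open>0 < lam\<close>]])
  qed
  define B where "B n = {\<omega>\<in>space M. exp (- lam * (dl * n)) \<le> crossing_sum lam n (\<lambda>e. X e \<omega>)}" for n
  have "B n \<in> events" for n
    unfolding B_def using meas by measurable
  moreover have "prob (B n) \<le> th ^ n" for n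
    unfolding B_def th_def by (rule prob_crossing_sum_ge_le[OF indep \<open>0 < lam\<close> \<open>0 \<le> ph\<close> moment])
  then have "(\<lambda>n. prob (B n)) \<longlonglongrightarrow> 0"
    using \<open>0 \<le> th\<close> \<open>th < 1\<close>
    by (intro tendsto_sandwich[OF _ _ tendsto_const LIMSEQ_power_zero[of th]]) auto
  ultimately have "AE \<omega> in M. \<not> (\<forall>\<^sub>F n in sequentially. \<omega> \<in> B n)"
    by (rule AE_not_eventually_in)
  moreover have "AE \<omega> in M. (\<lambda>n. passage_time (\<lambda>e. X e \<omega>) (0, 0) (int n, 0) / n) \<longlonglongrightarrow> 0
      \<longrightarrow> (\<forall>\<^sub>F n in sequentially. \<omega> \<in> B n)"
    using nonneg AE_space
  proof eventually_elim
    case (elim \<omega>)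
    show ?case
    proof
      assume "(\<lambda>n. passage_time (\<lambda>e. X e \<omega>) (0, 0) (int n, 0) / n) \<longlonglongrightarrow> 0"
      with elim have
        "\<forall>\<^sub>F n in sequentially. exp (- lam * (dl * n)) \<le> crossing_sum lam n (\<lambda>e. X e \<omega>)"
        by (intro eventually_exp_le_crossing_sum[OF _ \<open>0 < lam\<close> \<open>0 < dl\<close> \<open>dl \<le> 1\<close>]) auto
      then show "\<forall>\<^sub>F n in sequentially. \<omega> \<in> B n"
        by eventually_elim (use \<open>\<omega> \<in> space M\<close> in \<open>simp add: B_def\<close>)
    qed
  qed
  ultimately show ?thesis by eventually_elim blast
qed

lemma (in prob_space) AE_all_in_if_distr_eq:
  fixes X :: "'i::countable \<Rightarrow> 'a \<Rightarrow> real"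
  assumes "\<And>i. X i \<in> borel_measurable M" "\<And>i. distr M borel (X i) = G"
    and "A \<in> sets borel" "measure G A = 1"
  shows "AE \<omega> in M. \<forall>i. X i \<omega> \<in> A"
  unfolding AE_all_countable
proof
  fix i
  have "prob (X i -` A \<inter> space M) = 1"
    using measure_distr[OF assms(1,3)] assms(2,4) by simp
  then have "AE \<omega> in M. \<omega> \<in> X i -` A \<inter> space M"
    using assms(1,3) by (intro AE_prob_1) auto
  then show "AE \<omega> in M. X i \<omega> \<in> A" by (rule AE_mp) auto
qed

lemma eq_return_0_if_concentrated:
  fixes G :: "real measure"
  assumes "prob_space G" "sets G = sets borel" "measure G {0..} = 1"
    and no_mass: "\<And>eps. 0 < eps \<Longrightarrow> measure G {eps..} = 0"
  shows "G = return borel 0"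
proof -
  interpret G: prob_space G by fact
  have "AE x in G. x \<in> {0..}"
    using assms(2,3) by (intro G.AE_prob_1) auto
  moreover have "{1 / Suc k..} \<in> null_sets G" for k
    using no_mass[of "1 / Suc k"] assms(2) by (simp add: null_sets_def G.emeasure_eq_measure)
  then have "AE x in G. \<forall>k::nat. x \<notin> {1 / Suc k..}"
    unfolding AE_all_countable by (blast intro: AE_not_in)
  ultimately have "AE x in G. x = 0"
  proof eventually_elim
    case (elim x)
    show "x = 0"
    proof (rule ccontr)
      assume "x \<noteq> 0"
      with elim obtain k where "1 / Suc k < x"
        by (metis atLeast_iff order_neq_le_trans reals_Archimedean divide_inverse mult_1)
      with elim(2)[rule_format, of k] show False by simp
    qed
  qed
  then show ?thesis
    using G.AE_eq_constD(1) return_cong[OF assms(2)] by metis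
qed

lemma passage_time_limit_ge_slope:
  fixes v L :: real
  assumes nonneg: "\<And>e. 0 \<le> t e"
    and lim: "(\<lambda>n. passage_time t (0, 0) (int n, \<lceil>v * n\<rceil>) / n) \<longlonglongrightarrow> L"
  shows "v \<le> L"
proof (rule LIMSEQ_le_const[OF lim], intro exI allI impI)
  fix n :: nat assume "1 \<le> n"
  have "v * n \<le> real_of_int \<bar>\<lceil>v * n\<rceil>\<bar>" by linarith
  also have "\<dots> \<le> passage_time t (0, 0) (int n, \<lceil>v * n\<rceil>)"
    using passage_time_ge_height_diff[of t "(int n, \<lceil>v * n\<rceil>)" "(0, 0)"] nonneg by simp
  finally show "v \<le> passage_time t (0, 0) (int n, \<lceil>v * n\<rceil>) / n"
    using \<open>1 \<le> n\<close> by (simp add: le_divide_eq)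
qed

lemma (in prob_space) eq_return_0_if_passage_time_sublinear:
  fixes X :: "site \<Rightarrow> 'a \<Rightarrow> real" and G :: "real measure"
  assumes indep: "indep_vars (\<lambda>_. borel) X UNIV" and distr: "\<And>e. distr M borel (X e) = G"
    and G: "prob_space G" "sets G = sets borel" "measure G {0..} = 1"
    and nonneg: "AE \<omega> in M. \<forall>e. 0 \<le> X e \<omega>"
    and sublinear: "AE \<omega> in M. (\<lambda>n. passage_time (\<lambda>e. X e \<omega>) (0, 0) (int n, 0) / n) \<longlonglongrightarrow> 0"
  shows "G = return borel 0"
proof (rule eq_return_0_if_concentrated[OF G])
  interpret G: prob_space G by fact
  fix eps :: real assume "0 < eps"
  show "measure G {eps..} = 0"
  proof (rule ccontr)
    assume "measure G {eps..} \<noteq> 0"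
    moreover have "measure G {..<eps} = 1 - measure G {eps..}"
      using G.prob_compl[of "{eps..}"] sets_eq_imp_space_eq[OF G(2)] G(2)
      by (simp add: Compl_eq_Diff_UNIV[symmetric] not_le)
    ultimately have "measure G {..<eps} < 1" using measure_nonneg[of G "{eps..}"] by linarith
    moreover have "prob {\<omega>\<in>space M. X e \<omega> < eps} = measure G {..<eps}" for e
    proof -
      have "X e \<in> borel_measurable M" using indep_vars_measurable[OF indep] by simp
      from measure_distr[OF this, of "{..<eps}"] distr[of e]
      show ?thesis by (simp add: vimage_def Int_def conj_commute)
    qed
    ultimately have "AE \<omega> in M. \<not> (\<lambda>n. passage_time (\<lambda>e. X e \<omega>) (0, 0) (int n, 0) / n) \<longlonglongrightarrow> 0"
      by (intro AE_passage_time_not_sublinear[OF indep nonneg \<open>0 < eps\<close>, of "measure G {..<eps}"])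
        simp_all
    with sublinear have "AE \<omega> in M. False" by eventually_elim simp
    then show False by (simp add: AE_False)
  qed
qed

theorem lemma1p2:
  fixes M :: "'a measure" and G :: "real measure"
    and X :: "int \<times> int \<Rightarrow> 'a \<Rightarrow> real" and v L :: real
  assumes "prob_space M"
    and "prob_space G" and "sets G = sets borel" and "emeasure G {0..} = 1"
    and "prob_space.indep_vars M (\<lambda>_. borel) X UNIV"
    and "\<And>e. distr M borel (X e) = G"
    and "v \<ge> 0"
    and "AE \<omega> in M. (\<lambda>n. passage_time (\<lambda>e. X e \<omega>) (0, 0) (int n, \<lceil>v * real n\<rceil>) / real n)
                      \<longlonglongrightarrow> L"
  shows "L = 0 \<longleftrightarrow> (v = 0 \<and> G = return borel 0)"
proof -
  interpret prob_space M by fact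
  note indep = assms(5) and distr = assms(6) and conv = assms(8)
  have meas: "X e \<in> borel_measurable M" for e
    using indep_vars_measurable[OF indep] by simp
  have G_nonneg: "measure G {0..} = 1" using assms(4) by (simp add: measure_def)
  then have nonneg: "AE \<omega> in M. \<forall>e. 0 \<le> X e \<omega>"
    using AE_all_in_if_distr_eq[of X G "{0..}"] meas distr by simp
  show ?thesis
  proof
    assume "L = 0"
    obtain \<omega> where "\<forall>e. 0 \<le> X e \<omega>"
      and lim: "(\<lambda>n. passage_time (\<lambda>e. X e \<omega>) (0, 0) (int n, \<lceil>v * real n\<rceil>) / real n) \<longlonglongrightarrow> L"
      using eventually_happens'[OF ae_filter_bot eventually_conj[OF nonneg conv]] by blast
    then have "v \<le> L" by (intro passage_time_limit_ge_slope[OF _ lim]) blast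
    with \<open>v \<ge> 0\<close> \<open>L = 0\<close> have "v = 0" by simp
    have "AE \<omega> in M. (\<lambda>n. passage_time (\<lambda>e. X e \<omega>) (0, 0) (int n, 0) / n) \<longlonglongrightarrow> 0"
      using conv unfolding \<open>v = 0\<close> \<open>L = 0\<close> by simp
    then have "G = return borel 0"
      by (rule eq_return_0_if_passage_time_sublinear[OF indep distr assms(2,3) G_nonneg nonneg])
    with \<open>v = 0\<close> show "v = 0 \<and> G = return borel 0" ..
  next
    assume "v = 0 \<and> G = return borel 0"
    then have "measure G {0} = 1" by (simp add: measure_def)
    then have "AE \<omega> in M. \<forall>e. X e \<omega> = 0"
      using AE_all_in_if_distr_eq[of X G "{0}"] meas distr by simp
    then obtain \<omega> where "(\<lambda>e. X e \<omega>) = (\<lambda>_. 0)"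
      and "(\<lambda>n. passage_time (\<lambda>e. X e \<omega>) (0, 0) (int n, \<lceil>v * real n\<rceil>) / real n) \<longlonglongrightarrow> L"
      using eventually_happens'[OF ae_filter_bot eventually_conj[OF _ conv]] by fastforce
    with \<open>v = 0 \<and> _\<close> show "L = 0"
      using passage_time_zero_weights[of 0 0] by (simp add: LIMSEQ_const_iff)
  qed
qed

end
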